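(* Let $$y=\frac{s^3(2s^2-4s+3)(s^2-2s+2)}{(2s^2-2s+1)(3s^2-4s+2)},\qquad t=\left(\frac{s^2(2s^2-4s+3)}{3s^2-4s+2}\right)^2.$$ Then $y(t)$ is a solution of $\mathrm{P}_{\mathrm{VI}}$ with parameters $(\theta_1,\theta_2,\theta_3,\theta_4)=(1/3,1/4,1/2,2/3)$.
   Context: $\mathrm{P}_{\mathrm{VI}}$ is the equation $$\frac{d^2y}{dt^2}=\frac12\Big(\frac1y+\frac1{y-1}+\frac1{y-t}\Big)\Big(\frac{dy}{dt}\Big)^2-\Big(\frac1t+\frac1{t-1}+\frac1{y-t}\Big)\frac{dy}{dt}+\frac{y(y-1)(y-t)}{t^2(t-1)^2}\Big(\alpha+\beta\frac{t}{y^2}+\gamma\frac{t-1}{(y-1)^2}+\delta\frac{t(t-1)}{(y-t)^2}\Big),$$ with $\alpha=(\theta_4-1)^2/2$, $\beta=-\theta_1^2/2$, $\gamma=\theta_3^2/2$, $\delta=(1-\theta_2^2)/2$. When $y,t$ are given as rational functions of a parameter on a curve, derivatives with respect to $t$ are computed via the chain rule. *)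

theory Defs
  imports "HOL-Analysis.Analysis"
begin

definition PVI_eq :: "complex \<Rightarrow> complex \<Rightarrow> complex \<Rightarrow> complex \<Rightarrow>
    complex \<Rightarrow> complex \<Rightarrow> complex \<Rightarrow> complex \<Rightarrow> bool" where
  "PVI_eq \<theta>1 \<theta>2 \<theta>3 \<theta>4 t y yt ytt \<longleftrightarrow>
    (let \<alpha> = (\<theta>4 - 1)^2 / 2; \<beta> = - (\<theta>1^2) / 2;
         \<gamma> = \<theta>3^2 / 2; \<delta> = (1 - \<theta>2^2) / 2 in
     ytt = (1/2) * (1/y + 1/(y - 1) + 1/(y - t)) * yt^2
           - (1/t + 1/(t - 1) + 1/(y - t)) * yt
           + (y * (y - 1) * (y - t)) / (t^2 * (t - 1)^2)
             * (\<alpha> + \<beta> * t / y^2 + \<gamma> * (t - 1) / (y - 1)^2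
                + \<delta> * t * (t - 1) / (y - t)^2))"

end

theory Submission
  imports Defs
begin

(* After factoring t, t - 1, y,
   y - 1 and y - t, the derivatives dy/dt = y'(s)/t'(s) and d^2y/dt^2 = (dy/dt)'(s)/t'(s) only
   have these factors in their denominators, so every term of the Painleve VI equation becomes a
   monomial in the factors over one common denominator, and the equation reduces to a single
   polynomial identity in s. *)

(* The irreducible factors of t, t - 1, y, y - 1 and y - t other than s, s - 1 and s + 1. *)
abbreviation PA :: "'a::comm_ring_1 \<Rightarrow> 'a" where "PA s \<equiv> 2 * s ^ 2 - 4 * s + 3"
abbreviation PB :: "'a::comm_ring_1 \<Rightarrow> 'a" where "PB s \<equiv> s ^ 2 - 2 * s + 2"
abbreviation PC :: "'a::comm_ring_1 \<Rightarrow> 'a" where "PC s \<equiv> 3 * s ^ 2 - 4 * s + 2"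
abbreviation PE :: "'a::comm_ring_1 \<Rightarrow> 'a" where "PE s \<equiv> 2 * s ^ 2 - 2 * s + 1"
abbreviation PL :: "'a::comm_ring_1 \<Rightarrow> 'a" where "PL s \<equiv> s ^ 2 - s + 1"
abbreviation PM :: "'a::comm_ring_1 \<Rightarrow> 'a" where "PM s \<equiv> 2 * s ^ 4 - 4 * s ^ 3 + 3 * s ^ 2 - 4 * s + 2"
abbreviation PK :: "'a::comm_ring_1 \<Rightarrow> 'a" where "PK s \<equiv> 4 * s ^ 2 - 7 * s + 4"

abbreviation dY_num :: "'a::comm_ring_1 \<Rightarrow> 'a" where
  "dY_num s \<equiv> 36 - 208 * s + 576 * s ^ 2 - 996 * s ^ 3 + 1183 * s ^ 4 - 996 * s ^ 5 + 576 * s ^ 6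
    - 208 * s ^ 7 + 36 * s ^ 8"

abbreviation dslope_num :: "'a::comm_ring_1 \<Rightarrow> 'a" where
  "dslope_num s \<equiv> 216 - 2952 * s + 20036 * s ^ 2 - 88116 * s ^ 3 + 278686 * s ^ 4 - 669914 * s ^ 5
    + 1265919 * s ^ 6 - 1922019 * s ^ 7 + 2378163 * s ^ 8 - 2418543 * s ^ 9 + 2028618 * s ^ 10
    - 1400632 * s ^ 11 + 788988 * s ^ 12 - 355928 * s ^ 13 + 124360 * s ^ 14 - 31728 * s ^ 15
    + 5280 * s ^ 16 - 432 * s ^ 17"

abbreviation curve_y :: "'a::field \<Rightarrow> 'a" where
  "curve_y s \<equiv> s ^ 3 * PA s * PB s / (PE s * PC s)"

abbreviation curve_t :: "'a::field \<Rightarrow> 'a" where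
  "curve_t s \<equiv> (s ^ 2 * PA s / PC s) ^ 2"

lemma PVI_eq_iff:
  fixes \<theta>1 \<theta>2 \<theta>3 \<theta>4 t y p q :: complex
  assumes "t \<noteq> 0" "t \<noteq> 1" "y \<noteq> 0" "y \<noteq> 1" "y \<noteq> t"
  shows "PVI_eq \<theta>1 \<theta>2 \<theta>3 \<theta>4 t y p q \<longleftrightarrow>
    q = 1/2 * (1/y + 1/(y - 1) + 1/(y - t)) * p ^ 2 - (1/t + 1/(t - 1) + 1/(y - t)) * p
      + ((\<theta>4 - 1) ^ 2 / 2 * (y * (y - 1) * (y - t) / (t ^ 2 * (t - 1) ^ 2))
         - \<theta>1 ^ 2 / 2 * ((y - 1) * (y - t) / (y * t * (t - 1) ^ 2))
         + \<theta>3 ^ 2 / 2 * (y * (y - t) / (t ^ 2 * (t - 1) * (y - 1)))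
         + (1 - \<theta>2 ^ 2) / 2 * (y * (y - 1) / (t * (t - 1) * (y - t))))"
proof -
  have nz: "y - 1 \<noteq> 0" "y - t \<noteq> 0" "t - 1 \<noteq> 0"
    using assms by auto
  have split: "y * y1 * yt / (t ^ 2 * t1 ^ 2)
        * (\<alpha> + \<beta> * t / y ^ 2 + \<gamma> * t1 / y1 ^ 2 + \<delta> * t * t1 / yt ^ 2)
      = \<alpha> * (y * y1 * yt / (t ^ 2 * t1 ^ 2)) + \<beta> * (y1 * yt / (y * t * t1 ^ 2))
        + \<gamma> * (y * yt / (t ^ 2 * t1 * y1)) + \<delta> * (y * y1 / (t * t1 * yt))"
    if "y1 \<noteq> 0" "yt \<noteq> 0" "t1 \<noteq> 0" for y1 yt t1 \<alpha> \<beta> \<gamma> \<delta> :: complex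
    using that assms by (simp add: field_simps power2_eq_square)
  show ?thesis
    unfolding PVI_eq_def Let_def split[OF nz]
    by (simp only: minus_divide_left[symmetric] mult_minus_left add_uminus_conv_diff)
qed

lemma curve_t_eq:
  fixes s :: "'a::field"
  shows "curve_t s = s ^ 4 * PA s ^ 2 / PC s ^ 2"
  by (simp add: power_divide power_mult_distrib flip: power_mult)

lemma curve_t_minus_one:
  fixes s :: "'a::field"
  assumes "PC s \<noteq> 0"
  shows "curve_t s - 1 = 4 * PL s ^ 2 * (s - 1) ^ 3 * (s + 1) / PC s ^ 2"
  unfolding curve_t_eq using assms by (simp add: divide_simps) algebra

lemma curve_y_minus_one:
  fixes s :: "'a::field"
  assumes "PE s \<noteq> 0" "PC s \<noteq> 0"
  shows "curve_y s - 1 = PM s * PL s * (s - 1) / (PE s * PC s)"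
  using assms by (simp add: divide_simps) algebra

lemma curve_y_minus_curve_t:
  fixes s :: "'a::field"
  assumes "PE s \<noteq> 0" "PC s \<noteq> 0"
  shows "curve_y s - curve_t s = - (s ^ 3 * PL s * PA s * PK s * (s - 1)) / (PE s * PC s ^ 2)"
  unfolding curve_t_eq using assms by (simp add: divide_simps) algebra

lemma curve_factors_nonzero:
  fixes s :: "'a::field"
  assumes "PE s \<noteq> 0" "PC s \<noteq> 0" "curve_t s \<noteq> 0" "curve_t s \<noteq> 1"
    and "curve_y s \<noteq> 0" "curve_y s \<noteq> 1" "curve_y s \<noteq> curve_t s"
  shows "s \<noteq> 0" "PA s \<noteq> 0" "PB s \<noteq> 0" "PL s \<noteq> 0" "PM s \<noteq> 0" "PK s \<noteq> 0"
    and "s - 1 \<noteq> 0" "s + 1 \<noteq> 0"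
proof -
  show "s \<noteq> 0" "PA s \<noteq> 0"
    using assms(3) by auto
  show "PB s \<noteq> 0"
    using assms(5) by auto
  have "curve_t s - 1 \<noteq> 0"
    using assms(4) by simp
  then show "PL s \<noteq> 0" "s - 1 \<noteq> 0" "s + 1 \<noteq> 0"
    unfolding curve_t_minus_one[OF assms(2)] by auto
  have "curve_y s - 1 \<noteq> 0"
    using assms(6) by simp
  then show "PM s \<noteq> 0"
    unfolding curve_y_minus_one[OF assms(1,2)] by auto
  have "curve_y s - curve_t s \<noteq> 0"
    using assms(7) by simp
  then show "PK s \<noteq> 0"
    unfolding curve_y_minus_curve_t[OF assms(1,2)] by auto
qed

lemma has_field_derivative_divide_eqI:
  fixes f g :: "'a::real_normed_field \<Rightarrow> 'a"
  assumes "(f has_field_derivative f') (at x)" "(g has_field_derivative g') (at x)"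
    and "g x \<noteq> 0" "d \<noteq> 0" "(f' * g x - f x * g') * d = r * g x ^ 2"
  shows "((\<lambda>x. f x / g x) has_field_derivative r / d) (at x)"
proof -
  have "(f' * g x - f x * g') / (g x * g x) = r / d"
    using assms(3-5) by (simp add: field_simps power2_eq_square)
  then show ?thesis
    using DERIV_divide[OF assms(1-3)] by simp
qed

lemma has_field_derivative_curve_t:
  fixes u :: "'a::real_normed_field"
  assumes "PC u \<noteq> 0"
  shows "(curve_t has_field_derivative 24 * u ^ 3 * PL u * PA u * (u - 1) ^ 2 / PC u ^ 3) (at u)"
proof -
  have "((\<lambda>u. u ^ 4 * PA u ^ 2 / PC u ^ 2) has_field_derivative
      24 * u ^ 3 * PL u * PA u * (u - 1) ^ 2 / PC u ^ 3) (at u)"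
    by (rule has_field_derivative_divide_eqI, (rule derivative_eq_intros refl)+)
      (use assms in simp, use assms in simp, simp, algebra)
  then show ?thesis
    by (simp only: curve_t_eq)
qed

lemma has_field_derivative_curve_y:
  fixes u :: "'a::real_normed_field"
  assumes "PE u \<noteq> 0" "PC u \<noteq> 0"
  shows "(curve_y has_field_derivative u ^ 2 * dY_num u / (PE u ^ 2 * PC u ^ 2)) (at u)"
  by (rule has_field_derivative_divide_eqI, (rule derivative_eq_intros refl)+)
    (use assms in simp, use assms in simp, simp, algebra)

lemma has_field_derivative_curve_slope:
  fixes u :: "'a::real_normed_field"
  assumes "u \<noteq> 0" "PL u \<noteq> 0" "PA u \<noteq> 0" "PE u \<noteq> 0" "u - 1 \<noteq> 0"
  shows "((\<lambda>s. PC s * dY_num s / (24 * s * PL s * PA s * PE s ^ 2 * (s - 1) ^ 2))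
      has_field_derivative dslope_num u / (24 * u ^ 2 * PL u ^ 2 * PA u ^ 2 * PE u ^ 3 * (u - 1) ^ 3)) (at u)"
  by (rule has_field_derivative_divide_eqI, (rule derivative_eq_intros refl)+)
    (use assms in simp, use assms in simp, simp, algebra)

lemma curve_slope:
  fixes u :: "'a::real_normed_field"
  assumes "u \<noteq> 0" "PL u \<noteq> 0" "PA u \<noteq> 0" "PE u \<noteq> 0" "PC u \<noteq> 0" "u - 1 \<noteq> 0"
  shows "deriv curve_y u / deriv curve_t u
    = PC u * dY_num u / (24 * u * PL u * PA u * PE u ^ 2 * (u - 1) ^ 2)"
  unfolding DERIV_imp_deriv[OF has_field_derivative_curve_y[OF assms(4,5)]]
    DERIV_imp_deriv[OF has_field_derivative_curve_t[OF assms(5)]]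
  using assms by (simp add: divide_simps) algebra

lemma curve_second_derivative:
  fixes s :: "'a::real_normed_field"
  assumes "s \<noteq> 0" "PL s \<noteq> 0" "PA s \<noteq> 0" "PE s \<noteq> 0" "PC s \<noteq> 0" "s - 1 \<noteq> 0"
  shows "deriv (\<lambda>u. deriv curve_y u / deriv curve_t u) s / deriv curve_t s
    = PC s ^ 3 * dslope_num s / (576 * s ^ 5 * PL s ^ 3 * PA s ^ 3 * PE s ^ 3 * (s - 1) ^ 5)"
proof -
  let ?Q = "\<lambda>u::'a. u * PL u * PA u * PE u * PC u * (u - 1)"
  have "open {u. ?Q u \<noteq> 0}"
    by (rule open_Collect_neq) (intro continuous_intros)+
  moreover have "s \<in> {u. ?Q u \<noteq> 0}"
    using assms by simp
  ultimately have "\<forall>\<^sub>F u in nhds s. deriv curve_y u / deriv curve_t u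
      = PC u * dY_num u / (24 * u * PL u * PA u * PE u ^ 2 * (u - 1) ^ 2)"
    by (rule eventually_mono[OF eventually_nhds_in_open]) (simp add: curve_slope)
  then have "deriv (\<lambda>u. deriv curve_y u / deriv curve_t u) s
      = dslope_num s / (24 * s ^ 2 * PL s ^ 2 * PA s ^ 2 * PE s ^ 3 * (s - 1) ^ 3)"
    using DERIV_imp_deriv[OF has_field_derivative_curve_slope[OF assms(1-4,6)]]
    by (simp add: deriv_cong_ev)
  then show ?thesis
    unfolding DERIV_imp_deriv[OF has_field_derivative_curve_t[OF assms(5)]]
    using assms by (simp add: divide_simps) algebra
qed

lemma curve_PVI_identity:
  fixes s :: "'a::idom"
  shows "2 * dslope_num s * PB s * PM s * PK s * (s + 1) ^ 2
      = dY_num s ^ 2 * PL s * (s - 1) * PM s * PK s * (s + 1) ^ 2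
        + dY_num s ^ 2 * s ^ 3 * PA s * PB s * PK s * (s + 1) ^ 2
        - PC s * dY_num s ^ 2 * PB s * PM s * (s + 1) ^ 2
        - 48 * dY_num s * PL s ^ 2 * PE s * (s - 1) ^ 3 * PB s * PM s * PK s * (s + 1) ^ 2
        - 12 * dY_num s * (s + 1) * s ^ 4 * PA s ^ 2 * PE s * PB s * PM s * PK s
        + 48 * s * PL s * PA s * (s - 1) ^ 2 * PE s ^ 2 * dY_num s * PB s * PM s * (s + 1) ^ 2
        - 4 * s ^ 3 * PA s * PB s ^ 2 * PC s * PM s ^ 2 * PL s * (s - 1) * PK s ^ 2
        + 4 * s * PA s * PC s * PE s ^ 2 * PL s * (s - 1) * PM s ^ 2 * PK s ^ 2
        - 36 * s ^ 3 * PA s * PB s ^ 2 * PC s * PE s ^ 2 * PL s * PK s ^ 2 * (s - 1) ^ 2 * (s + 1)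
        - 135 * s * PA s * PB s ^ 2 * PC s * PE s ^ 2 * PM s ^ 2 * PL s * (s - 1) ^ 2 * (s + 1)"
  by algebra

lemma PVI_rhs_common_denominator:
  fixes s A B C E L M K m n V N t t1 y y1 yt p q :: "'a::field_char_0"
  assumes nz: "s \<noteq> 0" "A \<noteq> 0" "B \<noteq> 0" "C \<noteq> 0" "E \<noteq> 0" "L \<noteq> 0" "M \<noteq> 0" "K \<noteq> 0" "m \<noteq> 0" "n \<noteq> 0"
    and t: "t = s ^ 4 * A ^ 2 / C ^ 2" and t1: "t1 = 4 * L ^ 2 * m ^ 3 * n / C ^ 2"
    and y: "y = s ^ 3 * A * B / (E * C)" and y1: "y1 = M * L * m / (E * C)"
    and yt: "yt = - (s ^ 3 * L * A * K * m) / (E * C ^ 2)"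
    and p: "p = C * V / (24 * s * L * A * E ^ 2 * m ^ 2)"
    and q: "q = C ^ 3 * N / (576 * s ^ 5 * L ^ 3 * A ^ 3 * E ^ 3 * m ^ 5)"
    and identity: "2 * N * B * M * K * n ^ 2
        = V ^ 2 * L * m * M * K * n ^ 2
          + V ^ 2 * s ^ 3 * A * B * K * n ^ 2
          - C * V ^ 2 * B * M * n ^ 2
          - 48 * V * L ^ 2 * E * m ^ 3 * B * M * K * n ^ 2
          - 12 * V * n * s ^ 4 * A ^ 2 * E * B * M * K
          + 48 * s * L * A * m ^ 2 * E ^ 2 * V * B * M * n ^ 2
          - 4 * s ^ 3 * A * B ^ 2 * C * M ^ 2 * L * m * K ^ 2
          + 4 * s * A * C * E ^ 2 * L * m * M ^ 2 * K ^ 2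
          - 36 * s ^ 3 * A * B ^ 2 * C * E ^ 2 * L * K ^ 2 * m ^ 2 * n
          - 135 * s * A * B ^ 2 * C * E ^ 2 * M ^ 2 * L * m ^ 2 * n"
  shows "q = 1/2 * (1/y + 1/y1 + 1/yt) * p ^ 2 - (1/t + 1/t1 + 1/yt) * p
     + (1/18 * (y * y1 * yt / (t ^ 2 * t1 ^ 2)) - 1/18 * (y1 * yt / (y * t * t1 ^ 2))
        + 1/8 * (y * yt / (t ^ 2 * t1 * y1)) + 15/32 * (y * y1 / (t * t1 * yt)))"
proof -
  (* Clearing denominators term by term keeps each field_simps call on a single monomial;
     clearing the whole equation at once produces enormous cofactors. *)
  define D where "D = 1152 * s ^ 5 * A ^ 3 * B * E ^ 3 * L ^ 3 * M * K * m ^ 5 * n ^ 2 / C ^ 3"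
  have "D \<noteq> 0"
    using nz by (simp add: D_def)
  have qD: "q * D = 2 * N * B * M * K * n ^ 2"
    unfolding q D_def using nz by (simp add: field_simps)
  have terms:
    "p ^ 2 / (2 * y) * D = V ^ 2 * L * m * M * K * n ^ 2"
    "p ^ 2 / (2 * y1) * D = V ^ 2 * s ^ 3 * A * B * K * n ^ 2"
    "p ^ 2 / (2 * yt) * D = - (C * V ^ 2 * B * M * n ^ 2)"
    "p / t * D = 48 * V * L ^ 2 * E * m ^ 3 * B * M * K * n ^ 2"
    "p / t1 * D = 12 * V * n * s ^ 4 * A ^ 2 * E * B * M * K"
    "p / yt * D = - (48 * s * L * A * m ^ 2 * E ^ 2 * V * B * M * n ^ 2)"
    "y * y1 * yt / (18 * t ^ 2 * t1 ^ 2) * D = - (4 * s ^ 3 * A * B ^ 2 * C * M ^ 2 * L * m * K ^ 2)"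
    "y1 * yt / (18 * y * t * t1 ^ 2) * D = - (4 * s * A * C * E ^ 2 * L * m * M ^ 2 * K ^ 2)"
    "y * yt / (8 * t ^ 2 * t1 * y1) * D = - (36 * s ^ 3 * A * B ^ 2 * C * E ^ 2 * L * K ^ 2 * m ^ 2 * n)"
    "15 * y * y1 / (32 * t * t1 * yt) * D = - (135 * s * A * B ^ 2 * C * E ^ 2 * M ^ 2 * L * m ^ 2 * n)"
    unfolding t t1 y y1 yt p D_def using nz by (simp_all add: field_simps) algebra+
  have distrib: "(1/2 * (1/y + 1/y1 + 1/yt) * p ^ 2 - (1/t + 1/t1 + 1/yt) * p
     + (1/18 * (y * y1 * yt / (t ^ 2 * t1 ^ 2)) - 1/18 * (y1 * yt / (y * t * t1 ^ 2))
        + 1/8 * (y * yt / (t ^ 2 * t1 * y1)) + 15/32 * (y * y1 / (t * t1 * yt)))) * D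
     = p ^ 2 / (2 * y) * D + p ^ 2 / (2 * y1) * D + p ^ 2 / (2 * yt) * D
       - p / t * D - p / t1 * D - p / yt * D
       + y * y1 * yt / (18 * t ^ 2 * t1 ^ 2) * D - y1 * yt / (18 * y * t * t1 ^ 2) * D
       + y * yt / (8 * t ^ 2 * t1 * y1) * D + 15 * y * y1 / (32 * t * t1 * yt) * D"
    by (simp add: algebra_simps)
  have "q * D = (1/2 * (1/y + 1/y1 + 1/yt) * p ^ 2 - (1/t + 1/t1 + 1/yt) * p
     + (1/18 * (y * y1 * yt / (t ^ 2 * t1 ^ 2)) - 1/18 * (y1 * yt / (y * t * t1 ^ 2))
        + 1/8 * (y * yt / (t ^ 2 * t1 * y1)) + 15/32 * (y * y1 / (t * t1 * yt)))) * D"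
    unfolding qD distrib terms identity by simp
  then show ?thesis
    using \<open>D \<noteq> 0\<close> by simp
qed

lemma PVI_eq_of_factorization:
  fixes s A B C E L M K m n V N t y p q :: complex
  assumes nz: "s \<noteq> 0" "A \<noteq> 0" "B \<noteq> 0" "C \<noteq> 0" "E \<noteq> 0" "L \<noteq> 0" "M \<noteq> 0" "K \<noteq> 0" "m \<noteq> 0" "n \<noteq> 0"
    and t: "t = s ^ 4 * A ^ 2 / C ^ 2" and t1: "t - 1 = 4 * L ^ 2 * m ^ 3 * n / C ^ 2"
    and y: "y = s ^ 3 * A * B / (E * C)" and y1: "y - 1 = M * L * m / (E * C)"
    and yt: "y - t = - (s ^ 3 * L * A * K * m) / (E * C ^ 2)"
    and p: "p = C * V / (24 * s * L * A * E ^ 2 * m ^ 2)"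
    and q: "q = C ^ 3 * N / (576 * s ^ 5 * L ^ 3 * A ^ 3 * E ^ 3 * m ^ 5)"
    and identity: "2 * N * B * M * K * n ^ 2
        = V ^ 2 * L * m * M * K * n ^ 2
          + V ^ 2 * s ^ 3 * A * B * K * n ^ 2
          - C * V ^ 2 * B * M * n ^ 2
          - 48 * V * L ^ 2 * E * m ^ 3 * B * M * K * n ^ 2
          - 12 * V * n * s ^ 4 * A ^ 2 * E * B * M * K
          + 48 * s * L * A * m ^ 2 * E ^ 2 * V * B * M * n ^ 2
          - 4 * s ^ 3 * A * B ^ 2 * C * M ^ 2 * L * m * K ^ 2
          + 4 * s * A * C * E ^ 2 * L * m * M ^ 2 * K ^ 2
          - 36 * s ^ 3 * A * B ^ 2 * C * E ^ 2 * L * K ^ 2 * m ^ 2 * n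
          - 135 * s * A * B ^ 2 * C * E ^ 2 * M ^ 2 * L * m ^ 2 * n"
  shows "PVI_eq (1/3) (1/4) (1/2) (2/3) t y p q"
proof -
  have ne: "t \<noteq> 0" "t \<noteq> 1" "y \<noteq> 0" "y \<noteq> 1" "y \<noteq> t"
    using nz t t1 y y1 yt by auto
  have coeffs: "(2/3 - 1) ^ 2 / 2 = (1/18 :: complex)" "(1/3) ^ 2 / 2 = (1/18 :: complex)"
    "(1/2) ^ 2 / 2 = (1/8 :: complex)" "(1 - (1/4) ^ 2) / 2 = (15/32 :: complex)"
    by (simp_all add: power2_eq_square)
  show ?thesis
    unfolding PVI_eq_iff[OF ne] coeffs t1 y1 yt
    by (rule PVI_rhs_common_denominator[OF nz t refl y refl refl p q identity])
qed

theorem mainTheorem8: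
  fixes Y T :: "complex \<Rightarrow> complex" and s :: complex
  assumes Y_def: "Y = (\<lambda>s. s ^ 3 * (2 * s ^ 2 - 4 * s + 3) * (s ^ 2 - 2 * s + 2)
                       / ((2 * s ^ 2 - 2 * s + 1) * (3 * s ^ 2 - 4 * s + 2)))"
      and T_def: "T = (\<lambda>s. (s ^ 2 * (2 * s ^ 2 - 4 * s + 3) / (3 * s ^ 2 - 4 * s + 2)) ^ 2)"
      and den: "(2 * s ^ 2 - 2 * s + 1) * (3 * s ^ 2 - 4 * s + 2) \<noteq> 0"
      and dT: "deriv T s \<noteq> 0"
      and t0: "T s \<noteq> 0" and t1: "T s \<noteq> 1"
      and y0: "Y s \<noteq> 0" and y1: "Y s \<noteq> 1" and yt: "Y s \<noteq> T s"
  shows "PVI_eq (1/3) (1/4) (1/2) (2/3) (T s) (Y s)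
           (deriv Y s / deriv T s)
           (deriv (\<lambda>u. deriv Y u / deriv T u) s / deriv T s)"
proof -
  have E: "PE s \<noteq> 0" and C: "PC s \<noteq> 0"
    using den by auto
  note nz = curve_factors_nonzero[OF E C t0[unfolded T_def] t1[unfolded T_def]
      y0[unfolded Y_def] y1[unfolded Y_def] yt[unfolded Y_def T_def]]
  show ?thesis
    unfolding Y_def T_def
    by (rule PVI_eq_of_factorization[OF nz(1-3) C E nz(4-8) curve_t_eq curve_t_minus_one[OF C]
          refl curve_y_minus_one[OF E C] curve_y_minus_curve_t[OF E C]
          curve_slope[OF nz(1,4,2) E C nz(7)] curve_second_derivative[OF nz(1,4,2) E C nz(7)]
          curve_PVI_identity])
qed

end
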